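(* Let $p$ be an odd prime, $n$ a positive integer with $\gcd(n,p)=1$, and let $S$ be a uniquely negacyclic subspace of $\mathbb{F}_p^n\times\mathbb{F}_p^n$ with generating pair $(g,f)$. Then $S$ is totally isotropic if and only if $$g(X)f(X^{-1})=f(X)g(X^{-1})\mod X^n+1.$$ Further, an element $(\mathbf{a},\mathbf{b})\in\mathbb{F}_p^n\times\mathbb{F}_p^n$ lies in $S^{\perp}$ if and only if $$a(X)f(X^{-1})=b(X)g(X^{-1})\mod X^n+1.$$
   Context: Let $N:\mathbb{F}_p^n\to\mathbb{F}_p^n$ be $(u_0,\dots,u_{n-1})\mapsto(-u_{n-1},u_0,\dots,u_{n-2})$; a subspace $S$ is simultaneously negacyclic if $(\mathbf{a},\mathbf{b})\in S$ implies $(N\mathbf{a},N\mathbf{b})\in S$. Let $\mathcal{R}=\mathbb{F}_p[X]/\langle X^n+1\rangle$, with vectors $(a_0,\dots,a_{n-1})$ identified with $a(X)=\sum a_iX^i\in\mathcal{R}$; in $\mathcal{R}$, $X^{-1}=-X^{n-1}$ and $a(X^{-1})$ denotes substitution. For a simultaneously negacyclic $S$, let $F=\{\mathbf{a}:(\mathbf{a},\mathbf{b})\in S\}$ (an ideal of $\mathcal{R}$) and $g$ its monic generator dividing $X^n+1$; $S$ is uniquely negacyclic if there is a unique $f\in\mathcal{R}$ with $(g,f)\in S$, and $(g,f)$ is its generating pair. The symplectic inner product is $\langle(\mathbf{a},\mathbf{b}),(\mathbf{c},\mathbf{d})\rangle_s=\mathbf{a}^T\mathbf{d}-\mathbf{b}^T\mathbf{c}$;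 $S$ is totally isotropic if it vanishes on $S\times S$; $S^\perp$ is the symplectic dual of $S$. *)

theory Defs
  imports "HOL-Computational_Algebra.Polynomial"
begin

text \<open>Vectors in F^n are lists of length n; the field F_p is a finite field type of prime cardinality p.\<close>

definition vecs :: "nat \<Rightarrow> 'a list set" where
  "vecs n = {v. length v = n}"

definition pair_space :: "nat \<Rightarrow> ('a list \<times> 'a list) set" where
  "pair_space n = vecs n \<times> vecs n"

definition negashift :: "'a::ring_1 list \<Rightarrow> 'a list" where
  "negashift u = (if u = [] then [] else (- last u) # butlast u)"

definition vadd :: "'a::ring_1 list \<Rightarrow> 'a list \<Rightarrow> 'a list" where
  "vadd u v = map2 (+) u v"

definition vscale :: "'a::ring_1 \<Rightarrow> 'a list \<Rightarrow> 'a list" where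
  "vscale c u = map ((*) c) u"

definition dotp :: "'a::ring_1 list \<Rightarrow> 'a list \<Rightarrow> 'a" where
  "dotp u v = sum_list (map2 (*) u v)"

definition pair_subspace :: "nat \<Rightarrow> ('a::field list \<times> 'a list) set \<Rightarrow> bool" where
  "pair_subspace n S \<longleftrightarrow> S \<subseteq> pair_space n \<and> (replicate n 0, replicate n 0) \<in> S \<and>
     (\<forall>x\<in>S. \<forall>y\<in>S. (vadd (fst x) (fst y), vadd (snd x) (snd y)) \<in> S) \<and>
     (\<forall>c. \<forall>x\<in>S. (vscale c (fst x), vscale c (snd x)) \<in> S)"

definition simult_negacyclic :: "nat \<Rightarrow> ('a::field list \<times> 'a list) set \<Rightarrow> bool" where
  "simult_negacyclic n S \<longleftrightarrow> pair_subspace n S \<and>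
     (\<forall>a b. (a, b) \<in> S \<longrightarrow> (negashift a, negashift b) \<in> S)"

definition xn1 :: "nat \<Rightarrow> 'a::comm_ring_1 poly" where
  "xn1 n = monom 1 n + 1"

definition vec_of :: "nat \<Rightarrow> 'a::field poly \<Rightarrow> 'a list" where
  "vec_of n r = map (coeff (r mod xn1 n)) [0..<n]"

text \<open>Substitution a(X^{-1}), with X^{-1} = -X^{n-1} in R.\<close>
definition subst_inv :: "nat \<Rightarrow> 'a::comm_ring_1 poly \<Rightarrow> 'a poly" where
  "subst_inv n a = pcompose a (- monom 1 (n - 1))"

definition is_generator :: "nat \<Rightarrow> ('a::field list \<times> 'a list) set \<Rightarrow> 'a poly \<Rightarrow> bool" where
  "is_generator n S g \<longleftrightarrow> lead_coeff g = 1 \<and> g dvd xn1 n \<and>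
     fst ` S = {vec_of n (h * g) | h. True}"

text \<open>S is uniquely negacyclic with generating pair (g,f): f (an element of R, represented
  by its reduced polynomial of degree < n) is the unique element with (g,f) in S.\<close>
definition generating_pair :: "nat \<Rightarrow> ('a::field list \<times> 'a list) set \<Rightarrow> 'a poly \<Rightarrow> 'a poly \<Rightarrow> bool" where
  "generating_pair n S g f \<longleftrightarrow> simult_negacyclic n S \<and> is_generator n S g \<and>
     degree f < n \<and> (vec_of n g, vec_of n f) \<in> S \<and>
     (\<forall>f'. degree f' < n \<longrightarrow> (vec_of n g, vec_of n f') \<in> S \<longrightarrow> f' = f)"

definition symp :: "('a::ring_1 list \<times> 'a list) \<Rightarrow> ('a list \<times> 'a list) \<Rightarrow> 'a" where
  "symp x y = dotp (fst x) (snd y) - dotp (snd x) (fst y)"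

definition totally_isotropic :: "('a::ring_1 list \<times> 'a list) set \<Rightarrow> bool" where
  "totally_isotropic S \<longleftrightarrow> (\<forall>x\<in>S. \<forall>y\<in>S. symp x y = 0)"

definition symp_dual :: "nat \<Rightarrow> ('a::ring_1 list \<times> 'a list) set \<Rightarrow> ('a list \<times> 'a list) set" where
  "symp_dual n S = {x \<in> pair_space n. \<forall>y\<in>S. symp x y = 0}"

end

theory Submission
  imports Defs "HOL-Number_Theory.Cong"
begin

text \<open>Identify \<open>\<F>\<^sub>p\<^sup>n\<close> with \<open>R = \<F>\<^sub>p[X]/(X\<^sup>n+1)\<close>. Then the shift \<open>N\<close> is multiplication by \<open>X\<close>, so by
  uniqueness of \<open>f\<close> the space \<open>S\<close> is exactly \<open>{(hg, hf) | h \<in> R}\<close>. The Euclidean dot product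
  \<open>a\<^sup>Tb\<close> is the constant coefficient of \<open>a(X) b(X\<^sup>-\<^sup>1)\<close> in \<open>R\<close>, and this trace form is nondegenerate.
  Hence \<open>(a, b) \<bottom> (hg, hf)\<close> for all \<open>h\<close> iff the constant coefficient of
  \<open>h(X\<^sup>-\<^sup>1)(a f(X\<^sup>-\<^sup>1) - b g(X\<^sup>-\<^sup>1))\<close> vanishes for all \<open>h\<close>, iff \<open>a f(X\<^sup>-\<^sup>1) = b g(X\<^sup>-\<^sup>1)\<close> in \<open>R\<close>.
  Total isotropy is the case \<open>(a, b) = (hg, hf)\<close>.\<close>

lemma degree_xn1: "n > 0 \<Longrightarrow> degree (xn1 n :: 'a::field poly) = n"
  unfolding xn1_def by (simp add: degree_add_eq_left degree_monom_eq)

lemma degree_mod_xn1_less: "n > 0 \<Longrightarrow> degree ((u::'a::field poly) mod xn1 n) < n"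
  by (metis degree_0 degree_mod_less' degree_xn1 less_irrefl)

lemma mod_xn1_eq_self: "n > 0 \<Longrightarrow> degree (u::'a::field poly) < n \<Longrightarrow> u mod xn1 n = u"
  by (simp add: mod_poly_less degree_xn1)

lemma mod_xn1_eq_if_cong:
  "n > 0 \<Longrightarrow> [u = v] (mod xn1 n) \<Longrightarrow> degree v < n \<Longrightarrow> u mod xn1 n = (v::'a::field poly)"
  by (metis cong_def mod_xn1_eq_self)

lemma minus_monom_cong_xn1: "[- monom 1 n = (1 :: 'a::field poly)] (mod xn1 n)"
  unfolding cong_iff_dvd_diff xn1_def by (simp add: dvd_minus_iff[symmetric] del: dvd_minus_iff)

lemma length_vec_of [simp]: "length (vec_of n u) = n"
  by (simp add: vec_of_def)

lemma Poly_vec_of: "n > 0 \<Longrightarrow> Poly (vec_of n u) = (u::'a::field poly) mod xn1 n"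
  using degree_mod_xn1_less[of n u] unfolding vec_of_def
  by (intro poly_eqI) (auto simp: nth_default_def coeff_eq_0)

lemma vec_of_Poly: "length a = n \<Longrightarrow> vec_of n (Poly (a::'a::field list)) = a"
proof -
  assume a: "length a = n"
  show ?thesis
  proof (cases "n = 0")
    case False
    have "degree (Poly a) < n"
    proof (rule degree_lessI)
      show "\<forall>k\<ge>n. coeff (Poly a) k = 0" using a by (simp add: nth_default_def)
    qed (use False in simp)
    then have "Poly a mod xn1 n = Poly a" using False by (simp add: mod_xn1_eq_self)
    then show ?thesis
      using a unfolding vec_of_def by (intro nth_equalityI) (auto simp: nth_default_def)
  qed (use a in \<open>simp add: vec_of_def\<close>)
qed

lemma vec_of_eq_iff: "n > 0 \<Longrightarrow> vec_of n u = vec_of n v \<longleftrightarrow> u mod xn1 n = (v::'a::field poly) mod xn1 n"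
  by (metis Poly_vec_of vec_of_def)

lemma vec_of_mod_xn1 [simp]: "vec_of n (u mod xn1 n) = vec_of n u"
  by (simp add: vec_of_def)

lemma vec_of_0: "vec_of n 0 = replicate n 0"
  unfolding vec_of_def by (intro nth_equalityI) auto

lemma vadd_vec_of: "vadd (vec_of n u) (vec_of n v) = vec_of n (u + v)"
  unfolding vadd_def vec_of_def by (intro nth_equalityI) (auto simp: poly_mod_add_left)

lemma vscale_vec_of: "vscale c (vec_of n u) = vec_of n (smult c u)"
  unfolding vscale_def vec_of_def by (intro nth_equalityI) (auto simp: mod_smult_left)

text \<open>Reducing \<open>X q\<close> for \<open>q = \<Sum>\<^sub>i\<^sub><\<^sub>n q\<^sub>i X\<^sup>i\<close> replaces \<open>q\<^sub>n\<^sub>-\<^sub>1 X\<^sup>n\<close> by \<open>-q\<^sub>n\<^sub>-\<^sub>1\<close>.\<close>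
lemma negashift_vec_of:
  assumes n: "n > 0"
  shows "negashift (vec_of n u) = vec_of n (pCons 0 (u::'a::field poly))"
proof -
  define q where "q = u mod xn1 n"
  define c where "c = coeff q (n - 1)"
  define r where "r = q - monom c (n - 1)"
  have dq: "degree q < n" unfolding q_def using degree_mod_xn1_less n .
  have coeff_r: "coeff r k = (if k < n - 1 then coeff q k else 0)" for k
    using dq n by (auto simp: r_def c_def coeff_monom coeff_eq_0)
  have "[monom 1 1 * u = monom 1 1 * q] (mod xn1 n)"
    by (rule cong_mult) (simp_all add: cong_def q_def)
  then have "[pCons 0 u = pCons 0 q] (mod xn1 n)"
    by (simp add: monom_Suc)
  also have "pCons 0 q = pCons (- c) r + smult c (xn1 n)"
    using n by (intro poly_eqI) (auto simp: r_def xn1_def coeff_pCons coeff_monom split: nat.split)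
  also have "[\<dots> = pCons (- c) r] (mod xn1 n)"
    by (simp add: cong_iff_dvd_diff dvd_smult)
  finally have "pCons 0 u mod xn1 n = pCons (- c) r"
  proof (rule mod_xn1_eq_if_cong[OF n])
    show "degree (pCons (- c) r) < n"
      using n by (intro degree_lessI) (auto simp: coeff_pCons coeff_r split: nat.split)
  qed
  then have "vec_of n (pCons 0 u) = - c # map (coeff q) [0..<n - 1]"
    using n unfolding vec_of_def
    by (cases n) (auto simp: upt_conv_Cons map_Suc_upt[symmetric] coeff_r simp del: upt_Suc)
  moreover have "vec_of n u = map (coeff q) [0..<n - 1] @ [c]"
    using n unfolding vec_of_def q_def c_def by (cases n) auto
  ultimately show ?thesis
    by (simp add: negashift_def)
qed

abbreviation X_inv :: "nat \<Rightarrow> 'a::comm_ring_1 poly" where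
  "X_inv n \<equiv> - monom 1 (n - 1)"

lemma X_mult_X_inv_cong: "n > 0 \<Longrightarrow> [monom 1 1 * X_inv n = (1 :: 'a::field poly)] (mod xn1 n)"
  using minus_monom_cong_xn1[of n] by (simp add: mult_monom)

lemma X_inv_power_cong:
  assumes n: "n > 0" and k: "k \<le> n"
  shows "[X_inv n ^ k = - (monom 1 (n - k) :: 'a::field poly)] (mod xn1 n)"
proof -
  have "X_inv n ^ k = X_inv n ^ k * (1 :: 'a poly)" by simp
  also have "[\<dots> = X_inv n ^ k * - monom 1 n] (mod xn1 n)"
    by (intro cong_mult cong_refl cong_sym[OF minus_monom_cong_xn1])
  also have "monom 1 n = monom 1 (n - k) * (monom 1 1 ^ k :: 'a poly)"
    using k by (simp add: monom_power mult_monom)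
  also have "X_inv n ^ k * - (monom 1 (n - k) * monom 1 1 ^ k)
      = - (monom 1 (n - k) * (monom 1 1 * X_inv n) ^ k :: 'a poly)"
    unfolding power_mult_distrib[of "monom 1 1" "X_inv n" k] by (simp only: mult_minus_right ac_simps)
  also have "[\<dots> = - (monom 1 (n - k) * 1 ^ k)] (mod xn1 n)"
    by (intro cong_minus_minus_iff[THEN iffD2] cong_mult cong_refl cong_pow X_mult_X_inv_cong n)
  finally show ?thesis by simp
qed

lemma subst_inv_mult: "subst_inv n (u * v) = subst_inv n u * subst_inv n v"
  unfolding subst_inv_def by (rule pcompose_mult)

lemma subst_inv_monom: "subst_inv n (monom c j) = smult c (X_inv n ^ j)"
  unfolding subst_inv_def
  by (induction j) (auto simp: monom_Suc pcompose_pCons monom_0 pcompose_const)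

lemma xn1_dvd_subst_inv_xn1:
  assumes n: "n > 0"
  shows "xn1 n dvd subst_inv n (xn1 n :: 'a::field poly)"
proof -
  have "subst_inv n (xn1 n) = subst_inv n (monom 1 n) + (1 :: 'a poly)"
    by (simp add: xn1_def subst_inv_def pcompose_add pcompose_1)
  also have "\<dots> = X_inv n ^ n + 1"
    by (simp add: subst_inv_monom)
  also have "[\<dots> = - 1 + 1] (mod xn1 n)"
    by (intro cong_add cong_refl) (use X_inv_power_cong[OF n order_refl] in simp)
  finally show ?thesis by (simp add: cong_0_iff)
qed

lemma subst_inv_cong:
  assumes n: "n > 0" and uv: "[u = v] (mod xn1 n)"
  shows "[subst_inv n u = subst_inv n (v::'a::field poly)] (mod xn1 n)"
proof -
  obtain k where "u - v = xn1 n * k" using uv unfolding cong_iff_dvd_diff by blast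
  then have "subst_inv n u - subst_inv n v = subst_inv n (xn1 n) * subst_inv n k"
    by (simp add: subst_inv_def pcompose_diff[symmetric] pcompose_mult)
  then show ?thesis
    unfolding cong_iff_dvd_diff using xn1_dvd_subst_inv_xn1[OF n] by (metis dvd_mult2)
qed

lemma power_mult_power_split:
  fixes x y :: "'a::comm_monoid_mult"
  assumes "j \<le> i"
  shows "x ^ i * y ^ j = x ^ (i - j) * (x * y) ^ j"
proof -
  obtain d where "i = j + d" using assms le_Suc_ex by blast
  then show ?thesis by (simp add: power_add power_mult_distrib ac_simps)
qed

lemma coeff_0_monom_mult_X_inv_power:
  assumes n: "n > 0" and i: "i < n" and j: "j < n"
  shows "coeff ((monom 1 i * X_inv n ^ j) mod xn1 n) 0 = (if i = j then 1 else (0::'a::field))"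
proof -
  have monom_eq: "monom 1 m = (monom 1 1 :: 'a poly) ^ m" for m
    by (simp add: monom_power)
  show ?thesis
  proof (cases "j \<le> i")
    case True
    have "monom 1 i * X_inv n ^ j = monom 1 (i - j) * (monom 1 1 * X_inv n :: 'a poly) ^ j"
      unfolding monom_eq[of i] monom_eq[of "i - j"] by (rule power_mult_power_split[OF True])
    also have "[\<dots> = monom 1 (i - j) * 1 ^ j] (mod xn1 n)"
      by (intro cong_mult cong_refl cong_pow X_mult_X_inv_cong n)
    finally have "(monom 1 i * X_inv n ^ j) mod xn1 n = (monom 1 (i - j) :: 'a poly)"
      using i by (intro mod_xn1_eq_if_cong[OF n]) (simp_all add: degree_monom_eq)
    then show ?thesis using True by (simp add: coeff_monom)
  next
    case False
    have "monom 1 i * X_inv n ^ j = X_inv n ^ j * (monom 1 1 :: 'a poly) ^ i"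
      unfolding monom_eq[of i] by (rule mult.commute)
    also have "\<dots> = X_inv n ^ (j - i) * (X_inv n * monom 1 1) ^ i"
      using False by (intro power_mult_power_split) simp
    also have "\<dots> = (monom 1 1 * X_inv n) ^ i * X_inv n ^ (j - i)"
      by (simp only: mult.commute[of "X_inv n" "monom 1 1"] mult.commute[of "X_inv n ^ (j - i)"])
    also have "[\<dots> = 1 ^ i * - monom 1 (n - (j - i))] (mod xn1 n)"
      using False j by (intro cong_mult cong_pow X_mult_X_inv_cong X_inv_power_cong n) auto
    finally have "(monom 1 i * X_inv n ^ j) mod xn1 n = - (monom 1 (n - (j - i)) :: 'a poly)"
      using False j by (intro mod_xn1_eq_if_cong[OF n]) (simp_all add: degree_monom_eq)
    then show ?thesis using False j by (simp add: coeff_monom)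
  qed
qed

lemma dotp_map_upt: "dotp (map F [0..<n]) (map G [0..<n]) = (\<Sum>i<n. F i * G i)"
  by (induction n) (simp_all add: dotp_def)

lemma sum_monom_coeff_lessThan: "degree (q::'a::comm_monoid_add poly) < n \<Longrightarrow> (\<Sum>i<n. monom (coeff q i) i) = q"
  by (rule poly_eqI) (auto simp: coeff_sum coeff_monom coeff_eq_0)

lemma sum_mod_poly: "(sum f A) mod (m::'a::field poly) = (\<Sum>i\<in>A. f i mod m)"
  by (induction A rule: infinite_finite_induct) (simp_all add: poly_mod_add_left)

lemma dotp_vec_of:
  assumes n: "n > 0"
  shows "dotp (vec_of n u) (vec_of n v) = coeff ((u * subst_inv n v) mod xn1 n) (0::nat)"
proof -
  define u' where "u' = u mod xn1 n"
  define v' where "v' = (v::'a::field poly) mod xn1 n"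
  have "u' = (\<Sum>i<n. monom (coeff u' i) i)"
    unfolding u'_def by (rule sum_monom_coeff_lessThan[symmetric, OF degree_mod_xn1_less[OF n]])
  also have "\<dots> = (\<Sum>i<n. smult (coeff u' i) (monom 1 i))"
    by (simp add: smult_monom)
  finally have u'_sum: "u' = (\<Sum>i<n. smult (coeff u' i) (monom 1 i))" .
  have "subst_inv n v' = subst_inv n (\<Sum>j<n. monom (coeff v' j) j)"
    unfolding v'_def by (subst sum_monom_coeff_lessThan[OF degree_mod_xn1_less[OF n]]) (rule refl)
  also have "\<dots> = (\<Sum>j<n. subst_inv n (monom (coeff v' j) j))"
    by (simp add: subst_inv_def pcompose_sum)
  finally have v'_sum: "subst_inv n v' = (\<Sum>j<n. smult (coeff v' j) (X_inv n ^ j))"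
    by (simp add: subst_inv_monom)
  have "[u * subst_inv n v = u' * subst_inv n v'] (mod xn1 n)"
    by (intro cong_mult subst_inv_cong n) (simp_all add: u'_def v'_def cong_def)
  moreover have "u' * subst_inv n v' =
      (\<Sum>i<n. \<Sum>j<n. smult (coeff u' i * coeff v' j) (monom 1 i * X_inv n ^ j))"
    by (subst u'_sum, subst v'_sum) (simp add: sum_product mult_smult_left mult_smult_right ac_simps)
  ultimately have "(u * subst_inv n v) mod xn1 n =
      (\<Sum>i<n. \<Sum>j<n. smult (coeff u' i * coeff v' j) (monom 1 i * X_inv n ^ j)) mod xn1 n"
    unfolding cong_def by simp
  then have "coeff ((u * subst_inv n v) mod xn1 n) 0 =
      (\<Sum>i<n. \<Sum>j<n. coeff u' i * coeff v' j * coeff ((monom 1 i * X_inv n ^ j) mod xn1 n) 0)"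
    by (simp add: sum_mod_poly mod_smult_left coeff_sum)
  also have "\<dots> = (\<Sum>i<n. \<Sum>j<n. coeff u' i * coeff v' j * (if i = j then 1 else 0))"
    by (intro sum.cong refl) (simp only: lessThan_iff coeff_0_monom_mult_X_inv_power[OF n])
  also have "\<dots> = dotp (vec_of n u) (vec_of n v)"
    by (simp add: vec_of_def dotp_map_upt u'_def v'_def if_distrib cong: if_cong)
  finally show ?thesis ..
qed

lemma trace_form_nondegenerate:
  assumes n: "n > 0"
  shows "(\<forall>h. coeff ((W * subst_inv n h) mod xn1 n) 0 = 0) \<longleftrightarrow> W mod xn1 n = (0::'a::field poly)"
proof
  assume orth: "\<forall>h. coeff ((W * subst_inv n h) mod xn1 n) 0 = 0"
  show "W mod xn1 n = 0"
  proof (rule poly_eqI)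
    fix k
    show "coeff (W mod xn1 n) k = coeff 0 k"
    proof (cases "k < n")
      case True
      have "(monom 1 k :: 'a poly) mod xn1 n = monom 1 k"
        using True by (simp add: mod_xn1_eq_self n degree_monom_eq)
      then have "dotp (vec_of n W) (vec_of n (monom 1 k)) = coeff (W mod xn1 n) k"
        using True by (simp add: vec_of_def dotp_map_upt coeff_monom if_distrib cong: if_cong)
      then show ?thesis using orth by (simp add: dotp_vec_of[OF n])
    qed (use degree_mod_xn1_less[OF n, of W] in \<open>simp add: coeff_eq_0\<close>)
  qed
next
  assume "W mod xn1 n = 0"
  then show "\<forall>h. coeff ((W * subst_inv n h) mod xn1 n) 0 = 0"
    by (metis mod_mult_left_eq mult_zero_left mod_0 coeff_0)
qed

lemma pair_subspace_vec_of_combination: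
  assumes S: "pair_subspace n S"
    and "(vec_of n u, vec_of n v) \<in> S" and "(vec_of n u', vec_of n v') \<in> S"
  shows "(vec_of n (u + smult c u'), vec_of n (v + smult c v')) \<in> S"
proof -
  have add: "\<forall>x\<in>S. \<forall>y\<in>S. (vadd (fst x) (fst y), vadd (snd x) (snd y)) \<in> S"
    and scale: "\<forall>c. \<forall>x\<in>S. (vscale c (fst x), vscale c (snd x)) \<in> S"
    using S unfolding pair_subspace_def by blast+
  have "(vscale c (vec_of n u'), vscale c (vec_of n v')) \<in> S"
    using scale[rule_format, OF assms(3)] by simp
  from add[rule_format, OF assms(2) this] show ?thesis
    by (simp add: vscale_vec_of vadd_vec_of)
qed

lemma generating_pair_multiple_mem:
  assumes n: "n > 0" and G: "generating_pair n S g f"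
  shows "(vec_of n (h * g), vec_of n (h * f)) \<in> S"
proof (induction h)
  case 0
  then show ?case
    using G by (simp add: generating_pair_def simult_negacyclic_def pair_subspace_def vec_of_0)
next
  case (pCons c h)
  have S: "pair_subspace n S" and gf: "(vec_of n g, vec_of n f) \<in> S"
    using G by (simp_all add: generating_pair_def simult_negacyclic_def)
  have "(negashift (vec_of n (h * g)), negashift (vec_of n (h * f))) \<in> S"
    using G pCons.IH by (simp add: generating_pair_def simult_negacyclic_def)
  then have "(vec_of n (pCons 0 (h * g)), vec_of n (pCons 0 (h * f))) \<in> S"
    by (simp add: negashift_vec_of n)
  from pair_subspace_vec_of_combination[OF S this gf, of c] show ?case
    by (simp add: ac_simps)
qed

lemma mem_generating_pairE:
  assumes n: "n > 0" and G: "generating_pair n S g f" and "x \<in> S"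
  obtains h where "x = (vec_of n (h * g), vec_of n (h * f))"
proof -
  obtain a b where x: "x = (a, b)" and ab: "(a, b) \<in> S" using \<open>x \<in> S\<close> by (cases x) auto
  have S: "pair_subspace n S" and gf: "(vec_of n g, vec_of n f) \<in> S" and "degree f < n"
    and f_unique: "\<And>f'. degree f' < n \<Longrightarrow> (vec_of n g, vec_of n f') \<in> S \<Longrightarrow> f' = f"
    using G by (simp_all add: generating_pair_def simult_negacyclic_def)
  have "a \<in> fst ` S" using ab by (metis fst_conv image_eqI)
  then obtain h where a: "a = vec_of n (h * g)"
    using G unfolding generating_pair_def is_generator_def by blast
  have "(a, b) \<in> pair_space n" using S ab unfolding pair_subspace_def by blast
  then have "length b = n" by (simp add: pair_space_def vecs_def)
  then have b: "b = vec_of n (Poly b)" by (simp add: vec_of_Poly)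
  have hgf: "(vec_of n (h * g), vec_of n (h * f)) \<in> S"
    using generating_pair_multiple_mem[OF n G] .
  \<comment> \<open>\<open>(g, f) + ((a, b) - (hg, hf)) = (g, f + (b - hf))\<close> lies in \<open>S\<close>, so \<open>b = hf\<close> by uniqueness of \<open>f\<close>\<close>
  have "(vec_of n (h * g + smult (- 1) (h * g)), vec_of n (Poly b + smult (- 1) (h * f))) \<in> S"
    using ab hgf unfolding a by (subst (asm) b) (rule pair_subspace_vec_of_combination[OF S])
  from pair_subspace_vec_of_combination[OF S gf this, of 1]
  have "(vec_of n g, vec_of n ((f + (Poly b - h * f)) mod xn1 n)) \<in> S"
    by simp
  then have "(f + (Poly b - h * f)) mod xn1 n = f"
    using f_unique degree_mod_xn1_less[OF n] by blast
  moreover have "f mod xn1 n = f"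
    using \<open>degree f < n\<close> by (simp add: mod_xn1_eq_self n)
  ultimately have "Poly b mod xn1 n = (h * f) mod xn1 n"
    by (simp add: poly_mod_add_left poly_mod_diff_left)
  then have "b = vec_of n (h * f)"
    by (subst b) (simp add: vec_of_eq_iff n)
  then show ?thesis
    using that x a by blast
qed

lemma generating_pair_ball_iff:
  assumes n: "n > 0" and G: "generating_pair n S g f"
  shows "(\<forall>x\<in>S. P x) \<longleftrightarrow> (\<forall>h. P (vec_of n (h * g), vec_of n (h * f)))"
proof
  assume "\<forall>h. P (vec_of n (h * g), vec_of n (h * f))"
  then show "\<forall>x\<in>S. P x"
    by (metis mem_generating_pairE[OF n G])
qed (use generating_pair_multiple_mem[OF n G] in blast)

lemma symp_dual_iff:
  assumes n: "n > 0" and G: "generating_pair n S g f" and a: "length a = n" and b: "length b = n"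
  shows "(a, b) \<in> symp_dual n S \<longleftrightarrow>
    (Poly a * subst_inv n f) mod xn1 n = (Poly b * subst_inv n g) mod xn1 n"
proof -
  define W where "W = Poly a * subst_inv n f - Poly b * subst_inv n g"
  have symp_eq: "symp (a, b) (vec_of n (h * g), vec_of n (h * f)) = coeff ((W * subst_inv n h) mod xn1 n) 0"
    for h
  proof -
    have "symp (a, b) (vec_of n (h * g), vec_of n (h * f)) =
        dotp (vec_of n (Poly a)) (vec_of n (h * f)) - dotp (vec_of n (Poly b)) (vec_of n (h * g))"
      using a b by (simp add: symp_def vec_of_Poly)
    also have "\<dots> = coeff ((Poly a * subst_inv n (h * f) - Poly b * subst_inv n (h * g)) mod xn1 n) 0"
      by (simp add: dotp_vec_of n poly_mod_diff_left)
    also have "Poly a * subst_inv n (h * f) - Poly b * subst_inv n (h * g) = W * subst_inv n h"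
      by (simp add: W_def subst_inv_mult algebra_simps)
    finally show ?thesis .
  qed
  have "(a, b) \<in> symp_dual n S \<longleftrightarrow> (\<forall>y\<in>S. symp (a, b) y = 0)"
    using a b by (simp add: symp_dual_def pair_space_def vecs_def)
  also have "\<dots> \<longleftrightarrow> (\<forall>h. symp (a, b) (vec_of n (h * g), vec_of n (h * f)) = 0)"
    by (rule generating_pair_ball_iff[OF n G])
  also have "\<dots> \<longleftrightarrow> W mod xn1 n = 0"
    unfolding symp_eq by (rule trace_form_nondegenerate[OF n])
  also have "\<dots> \<longleftrightarrow> (Poly a * subst_inv n f) mod xn1 n = (Poly b * subst_inv n g) mod xn1 n"
    by (simp add: W_def poly_mod_diff_left)
  finally show ?thesis .
qed

lemma totally_isotropic_iff_subset_symp_dual: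
  "S \<subseteq> pair_space n \<Longrightarrow> totally_isotropic S \<longleftrightarrow> S \<subseteq> symp_dual n S"
  by (auto simp: totally_isotropic_def symp_dual_def)

lemma all_mult_mod_eq_iff:
  "(\<forall>h. (h * u) mod m = (h * v) mod m) \<longleftrightarrow> u mod m = (v mod m :: 'a::euclidean_semiring_cancel)"
proof
  assume "\<forall>h. (h * u) mod m = (h * v) mod m"
  from this[rule_format, of 1] show "u mod m = v mod m" by simp
next
  assume uv: "u mod m = v mod m"
  show "\<forall>h. (h * u) mod m = (h * v) mod m"
    by (metis mod_mult_right_eq uv)
qed

theorem mainTheorem5:
  fixes S :: "('a::{finite,field} list \<times> 'a list) set"
    and g f :: "'a poly" and n p :: nat
  assumes "card (UNIV :: 'a set) = p" and "prime p" and "odd p"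
    and "n > 0" and "coprime n p"
    and "generating_pair n S g f"
  shows "(totally_isotropic S \<longleftrightarrow>
            (g * subst_inv n f) mod xn1 n = (f * subst_inv n g) mod xn1 n)
       \<and> (\<forall>a b. length a = n \<longrightarrow> length b = n \<longrightarrow>
            ((a, b) \<in> symp_dual n S \<longleftrightarrow>
             (Poly a * subst_inv n f) mod xn1 n = (Poly b * subst_inv n g) mod xn1 n))"
proof -
  note n = \<open>n > 0\<close> and G = \<open>generating_pair n S g f\<close>
  have "S \<subseteq> pair_space n"
    using G by (simp add: generating_pair_def simult_negacyclic_def pair_subspace_def)
  then have "totally_isotropic S \<longleftrightarrow> (\<forall>x\<in>S. x \<in> symp_dual n S)"
    by (simp add: totally_isotropic_iff_subset_symp_dual subset_eq)
  also have "\<dots> \<longleftrightarrow> (\<forall>h. (vec_of n (h * g), vec_of n (h * f)) \<in> symp_dual n S)"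
    by (rule generating_pair_ball_iff[OF n G])
  also have "\<dots> \<longleftrightarrow> (\<forall>h. (h * (g * subst_inv n f)) mod xn1 n = (h * (f * subst_inv n g)) mod xn1 n)"
    by (simp add: symp_dual_iff[OF n G] Poly_vec_of n mod_mult_right_eq ac_simps)
  also have "\<dots> \<longleftrightarrow> (g * subst_inv n f) mod xn1 n = (f * subst_inv n g) mod xn1 n"
    by (rule all_mult_mod_eq_iff)
  finally show ?thesis
    using symp_dual_iff[OF n G] by blast
qed

end
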